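(* With $X_n,Y_n$ as below, let $M_{a,b}(n)=E[X_n^{a}Y_n^{b}]$. Then for all integers $r,s\ge 1$: $$\lim_{n\to\infty}M_{2r,2s}(n)=\frac{(2r)!}{2^r r!}\cdot\frac{(2s)!}{2^s s!},\qquad \lim_{n\to\infty}M_{2r-1,2s-1}(n)=0,$$ and moreover $M_{2r,2s-1}(n)=0$ and $M_{2r-1,2s}(n)=0$ for every $n$.
   Context: For a permutation $\pi=\pi_1\cdots\pi_n$ of $\{1,\dots,n\}$: $\mathrm{inv}(\pi)$ is the number of pairs $1\le i<j\le n$ with $\pi_i>\pi_j$, and $\mathrm{maj}(\pi)$ is the sum of all positions $i\in\{1,\dots,n-1\}$ with $\pi_i>\pi_{i+1}$. For $\pi$ uniformly random in $S_n$ ($n\ge2$), $X_n=(\mathrm{inv}(\pi)-m_n)/\sigma_n$ and $Y_n=(\mathrm{maj}(\pi)-m_n)/\sigma_n$, where $m_n=n(n-1)/4$ and $\sigma_n^2=(2n^3+3n^2-5n)/72$. *)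

theory Defs
  imports "HOL-Analysis.Analysis" "HOL-Combinatorics.Permutations"
begin

definition inv_stat :: "nat \<Rightarrow> (nat \<Rightarrow> nat) \<Rightarrow> nat" where
  "inv_stat n p = card {(i, j). 1 \<le> i \<and> i < j \<and> j \<le> n \<and> p i > p j}"

definition maj_stat :: "nat \<Rightarrow> (nat \<Rightarrow> nat) \<Rightarrow> nat" where
  "maj_stat n p = (\<Sum>i \<in> {i. 1 \<le> i \<and> i \<le> n - 1 \<and> p i > p (Suc i)}. i)"

definition mean_n :: "nat \<Rightarrow> real" where
  "mean_n n = real n * (real n - 1) / 4"

definition sigma_n :: "nat \<Rightarrow> real" where
  "sigma_n n = sqrt ((2 * real n ^ 3 + 3 * real n ^ 2 - 5 * real n) / 72)"

definition X_n :: "nat \<Rightarrow> (nat \<Rightarrow> nat) \<Rightarrow> real" where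
  "X_n n p = (real (inv_stat n p) - mean_n n) / sigma_n n"

definition Y_n :: "nat \<Rightarrow> (nat \<Rightarrow> nat) \<Rightarrow> real" where
  "Y_n n p = (real (maj_stat n p) - mean_n n) / sigma_n n"

definition M_mom :: "nat \<Rightarrow> nat \<Rightarrow> nat \<Rightarrow> real" where
  "M_mom a b n = (\<Sum>p \<in> {p. p permutes {1..n}}. X_n n p ^ a * Y_n n p ^ b)
                 / real (card {p. p permutes {1..n}})"

end

theory Submission
  imports Defs "HOL-Real_Asymp.Real_Asymp"
begin

text \<open>Write I = inv - m_N and M = maj - m_N for the centred statistics on the permutations of {1..N}.
  Every permutation of {1..N+1} arises exactly once by inserting the letter N+1 into a permutation
  w of {1..N} after its first s letters, 0 \<le> s \<le> N.  This raises inv by N - s and maj by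
  an amount maj_shift N s w which, for fixed w, runs bijectively through {0..N} as s does
  (the classical insertion proof that inv and maj are equidistributed).  Expanding binomially, the joint
  power sums of (I, M) satisfy a recursion in N whose coefficients are power sums over s of the
  centred shifts.  The complement p i \<mapsto> N+1 - p i negates I and M, so all joint moments of
  odd total degree vanish; averaged against the complement, the mixed (1,1) coefficient is also
  explicit.  An induction on the total degree 2K, with the Stolz-Cesaro theorem and denominators
  sigma_N^(2K), then shows that E[I^a M^b] / sigma_N^(a+b) tends to g(a) g(b), where g(k) is the k-th
  moment of the standard Gaussian; the main theorem is the case of even and of odd exponents.\<close>

definition perms :: "nat \<Rightarrow> (nat \<Rightarrow> nat) set" where
  "perms n = {p. p permutes {1..n}}"

lemma finite_perms: "finite (perms n)"
  unfolding perms_def by (rule finite_permutations) simp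

lemma card_perms: "card (perms n) = fact n"
  unfolding perms_def by (rule card_permutations) auto

lemma permutes_interval_range:
  "w permutes {1..N} \<Longrightarrow> 1 \<le> i \<Longrightarrow> i \<le> N \<Longrightarrow> 1 \<le> w i \<and> w i \<le> N"
  using permutes_in_image[of w "{1..N}" i] by auto

lemma permutes_interval_inj: "w permutes {1..N} \<Longrightarrow> w i = w j \<Longrightarrow> i = j"
  using permutes_inj by (metis injD)

text \<open>insert_top N s w inserts the letter N+1 into the word w 1 ... w N right after its first s
  letters, giving the word w 1 ... w s (N+1) w (s+1) ... w N.\<close>
definition insert_top :: "nat \<Rightarrow> nat \<Rightarrow> (nat \<Rightarrow> nat) \<Rightarrow> nat \<Rightarrow> nat" where
  "insert_top N s w i =
     (if i \<le> s then w i else if i = Suc s then Suc N else if i \<le> Suc N then w (i - 1) else i)"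

lemma insert_top_old_letter:
  assumes w: "w permutes {1..N}" and s: "s \<le> N" and i: "1 \<le> i" "i \<le> Suc N" "i \<noteq> Suc s"
  shows "1 \<le> insert_top N s w i \<and> insert_top N s w i \<le> N"
proof (cases "i \<le> s")
  case True
  then show ?thesis using permutes_interval_range[OF w, of i] i s by (simp add: insert_top_def)
next
  case False
  then have "1 \<le> i - 1" "i - 1 \<le> N" using i by auto
  then show ?thesis
    using permutes_interval_range[OF w, of "i - 1"] i s False by (simp add: insert_top_def)
qed

lemma insert_top_eq_top_iff:
  assumes w: "w permutes {1..N}" and s: "s \<le> N" and i: "i \<le> Suc N"
  shows "insert_top N s w i = Suc N \<longleftrightarrow> i = Suc s"
proof (cases "i = 0")
  case True
  then show ?thesis using permutes_not_in[OF w, of 0] by (simp add: insert_top_def)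
next
  case False
  then show ?thesis using insert_top_old_letter[OF w s, of i] i by (auto simp: insert_top_def)
qed

lemma insert_top_permutes:
  assumes w: "w permutes {1..N}" and s: "s \<le> N"
  shows "insert_top N s w permutes {1..Suc N}"
proof (rule bij_imp_permutes)
  let ?q = "insert_top N s w"
  define f where "f i = (if i \<le> s then i else i - 1)" for i
  have q_f: "?q i = w (f i)" if "i \<noteq> Suc s" "i \<le> Suc N" for i
    using that by (auto simp: insert_top_def f_def)
  have inj: "inj_on ?q {1..Suc N}"
  proof (rule inj_onI)
    fix i j assume i: "i \<in> {1..Suc N}" and j: "j \<in> {1..Suc N}" and e: "?q i = ?q j"
    show "i = j"
    proof (cases "i = Suc s \<or> j = Suc s")
      case True
      have "i = Suc s \<longleftrightarrow> j = Suc s"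
        using e i j insert_top_eq_top_iff[OF w s, of i] insert_top_eq_top_iff[OF w s, of j] by auto
      then show ?thesis using True by blast
    next
      case False
      then have "w (f i) = w (f j)" using e i j q_f[of i] q_f[of j] by simp
      then have "f i = f j" by (rule permutes_interval_inj[OF w])
      then show ?thesis using False i j by (auto simp: f_def split: if_splits)
    qed
  qed
  have "?q ` {1..Suc N} \<subseteq> {1..Suc N}"
  proof
    fix y assume "y \<in> ?q ` {1..Suc N}"
    then obtain i where i: "i \<in> {1..Suc N}" and y: "y = ?q i" by auto
    show "y \<in> {1..Suc N}" using i y s insert_top_old_letter[OF w s, of i]
      by (cases "i = Suc s") (auto simp: insert_top_def)
  qed
  then show "bij_betw ?q {1..Suc N} {1..Suc N}"
    using inj endo_inj_surj[of "{1..Suc N}" ?q] by (simp add: bij_betw_def)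
next
  fix x assume "x \<notin> {1..Suc N}"
  then show "insert_top N s w x = x"
    using permutes_not_in[OF w, of 0] permutes_not_in[OF w, of x] s by (auto simp: insert_top_def)
qed

lemma insert_top_inj:
  assumes w: "w permutes {1..N}" and s: "s \<le> N" and w': "w' permutes {1..N}" and s': "s' \<le> N"
    and e: "insert_top N s w = insert_top N s' w'"
  shows "s = s' \<and> w = w'"
proof -
  have "insert_top N s' w' (Suc s) = Suc N"
    using e insert_top_eq_top_iff[OF w s, of "Suc s"] s by simp
  then have ss: "s = s'" using insert_top_eq_top_iff[OF w' s', of "Suc s"] s by simp
  have "w i = w' i" for i
  proof -
    consider "i \<le> s" | "s < i" "i \<le> N" | "N < i" by linarith
    then show ?thesis
    proof cases
      case 1 then show ?thesis using fun_cong[OF e, of i] ss by (simp add: insert_top_def)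
    next
      case 2 then show ?thesis using fun_cong[OF e, of "Suc i"] ss by (simp add: insert_top_def)
    next
      case 3 then show ?thesis using permutes_not_in[OF w, of i] permutes_not_in[OF w', of i] by simp
    qed
  qed
  then show ?thesis using ss by auto
qed

lemma sum_perms_Suc:
  fixes F :: "(nat \<Rightarrow> nat) \<Rightarrow> 'a::comm_monoid_add"
  shows "(\<Sum>q\<in>perms (Suc N). F q) = (\<Sum>w\<in>perms N. \<Sum>s\<le>N. F (insert_top N s w))"
proof -
  let ?g = "\<lambda>(w, s). insert_top N s w" and ?A = "perms N \<times> {..N}"
  have inj: "inj_on ?g ?A"
  proof (rule inj_onI)
    fix x y assume "x \<in> ?A" "y \<in> ?A" "?g x = ?g y"
    then show "x = y" using insert_top_inj[of "fst x" N "snd x" "fst y" "snd y"]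
      by (auto simp: perms_def case_prod_beta prod_eq_iff)
  qed
  have sub: "?g ` ?A \<subseteq> perms (Suc N)"
    using insert_top_permutes by (auto simp: perms_def)
  have "card (?g ` ?A) = card (perms (Suc N))"
    using card_image[OF inj] by (simp add: card_cartesian_product card_perms)
  then have img: "?g ` ?A = perms (Suc N)"
    using card_subset_eq[OF finite_perms sub] by simp
  have "(\<Sum>q\<in>perms (Suc N). F q) = (\<Sum>x\<in>?A. F (?g x))"
    unfolding img[symmetric] by (rule sum.reindex[OF inj, unfolded comp_def])
  then show ?thesis by (simp add: sum.cartesian_product case_prod_beta')
qed

definition inv_pairs :: "nat \<Rightarrow> (nat \<Rightarrow> nat) \<Rightarrow> (nat \<times> nat) set" where
  "inv_pairs n p = {(i, j). 1 \<le> i \<and> i < j \<and> j \<le> n \<and> p i > p j}"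

lemma inv_stat_card: "inv_stat n p = card (inv_pairs n p)"
  by (simp add: inv_stat_def inv_pairs_def)

lemma finite_inv_pairs: "finite (inv_pairs n p)"
  by (rule finite_subset[of _ "{1..n} \<times> {1..n}"]) (auto simp: inv_pairs_def)

text \<open>The position of the old letter w i in the word insert_top N s w.\<close>
definition skip :: "nat \<Rightarrow> nat \<Rightarrow> nat" where
  "skip s i = (if i \<le> s then i else Suc i)"

lemma insert_top_skip: "i \<le> N \<Longrightarrow> insert_top N s w (skip s i) = w i"
  by (auto simp: insert_top_def skip_def)

lemma skip_less_iff: "skip s i < skip s j \<longleftrightarrow> i < j"
  by (auto simp: skip_def)

lemma insert_top_le:
  assumes w: "\<And>i. 1 \<le> i \<Longrightarrow> i \<le> N \<Longrightarrow> w i \<le> N" and s: "s \<le> N"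
    and i: "1 \<le> i" "i \<le> Suc N" "i \<noteq> Suc s"
  shows "insert_top N s w i \<le> N"
proof (cases "i \<le> s")
  case True then show ?thesis using w[of i] i s by (simp add: insert_top_def)
next
  case False then show ?thesis using w[of "i - 1"] i s by (simp add: insert_top_def)
qed

lemma inv_pairs_insert_top_subset:
  assumes w: "\<And>i. 1 \<le> i \<Longrightarrow> i \<le> N \<Longrightarrow> w i \<le> N" and s: "s \<le> N"
  shows "inv_pairs (Suc N) (insert_top N s w) \<subseteq>
           (\<lambda>(i, j). (skip s i, skip s j)) ` inv_pairs N w \<union> Pair (Suc s) ` {Suc (Suc s)..Suc N}"
proof
  let ?q = "insert_top N s w"
  define unskip where "unskip i = (if i \<le> s then i else i - 1)" for i
  have skip_unskip: "skip s (unskip i) = i" if "i \<noteq> Suc s" for i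
    using that by (auto simp: skip_def unskip_def)
  fix x assume x: "x \<in> inv_pairs (Suc N) ?q"
  obtain i j where ij: "x = (i, j)" by force
  have ij': "1 \<le> i" "i < j" "j \<le> Suc N" "?q i > ?q j" using x ij by (auto simp: inv_pairs_def)
  have jn: "j \<noteq> Suc s"
  proof
    assume "j = Suc s"
    then have "?q j = Suc N" by (simp add: insert_top_def)
    moreover have "?q i \<le> N" using insert_top_le[OF w s, where i=i] ij' \<open>j = Suc s\<close> by simp
    ultimately show False using ij' by simp
  qed
  show "x \<in> (\<lambda>(i, j). (skip s i, skip s j)) ` inv_pairs N w \<union> Pair (Suc s) ` {Suc (Suc s)..Suc N}"
  proof (cases "i = Suc s")
    case True then show ?thesis using ij ij' by auto
  next
    case False
    have "1 \<le> unskip i" using ij' False by (auto simp: unskip_def)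
    have "unskip i \<le> N" "unskip j \<le> N" using ij' False jn s by (auto simp: unskip_def)
    then have "(unskip i, unskip j) \<in> inv_pairs N w"
      using ij' False \<open>1 \<le> unskip i\<close> insert_top_skip[of "unskip i" N s w]
        insert_top_skip[of "unskip j" N s w] skip_unskip[OF False] skip_unskip[OF jn]
        skip_less_iff[of s "unskip i" "unskip j"]
      by (auto simp: inv_pairs_def)
    moreover have "x = (\<lambda>(i, j). (skip s i, skip s j)) (unskip i, unskip j)"
      using ij skip_unskip[OF False] skip_unskip[OF jn] by simp
    ultimately show ?thesis by blast
  qed
qed

lemma inv_pairs_insert_top:
  assumes w: "\<And>i. 1 \<le> i \<Longrightarrow> i \<le> N \<Longrightarrow> w i \<le> N" and s: "s \<le> N"
  shows "inv_pairs (Suc N) (insert_top N s w) =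
           (\<lambda>(i, j). (skip s i, skip s j)) ` inv_pairs N w \<union> Pair (Suc s) ` {Suc (Suc s)..Suc N}"
    (is "?L = ?E \<union> ?B")
proof (intro equalityI subsetI)
  have "?L \<subseteq> ?E \<union> ?B" by (rule inv_pairs_insert_top_subset[OF w s])
  then show "x \<in> ?E \<union> ?B" if "x \<in> ?L" for x using that by blast
  fix x assume "x \<in> ?E \<union> ?B"
  then show "x \<in> ?L"
  proof
    assume "x \<in> ?E"
    then obtain i j where "(i, j) \<in> inv_pairs N w" "x = (skip s i, skip s j)" by auto
    then show ?thesis
      using insert_top_skip[of i N s w] insert_top_skip[of j N s w] skip_less_iff[of s i j]
      by (auto simp: inv_pairs_def skip_def)
  next
    assume "x \<in> ?B"
    then obtain j where j: "Suc (Suc s) \<le> j" "j \<le> Suc N" "x = (Suc s, j)" by auto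
    have "insert_top N s w j \<le> N" using insert_top_le[OF w s, where i=j] j by simp
    moreover have "insert_top N s w (Suc s) = Suc N" by (simp add: insert_top_def)
    ultimately show ?thesis using j by (auto simp: inv_pairs_def)
  qed
qed

lemma inv_stat_insert_top:
  assumes w: "\<And>i. 1 \<le> i \<Longrightarrow> i \<le> N \<Longrightarrow> w i \<le> N" and s: "s \<le> N"
  shows "inv_stat (Suc N) (insert_top N s w) = inv_stat N w + (N - s)"
proof -
  let ?E = "\<lambda>(i, j). (skip s i, skip s j)" and ?B = "Pair (Suc s) ` {Suc (Suc s)..Suc N}"
  have inj: "inj_on ?E (inv_pairs N w)"
    by (rule inj_onI) (auto simp: skip_def split: if_splits)
  have disj: "?E ` inv_pairs N w \<inter> ?B = {}"
    by (auto simp: skip_def split: if_splits)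
  have split: "inv_pairs (Suc N) (insert_top N s w) = ?E ` inv_pairs N w \<union> ?B"
    by (rule inv_pairs_insert_top[OF w s])
  have "card (inv_pairs (Suc N) (insert_top N s w)) = card (?E ` inv_pairs N w) + card ?B"
    unfolding split by (rule card_Un_disjoint) (auto simp: finite_inv_pairs disj)
  also have "card (?E ` inv_pairs N w) = card (inv_pairs N w)" by (rule card_image[OF inj])
  also have "card ?B = N - s" by (subst card_image) (auto simp: inj_on_def)
  finally show ?thesis by (simp add: inv_stat_card)
qed

definition descents :: "nat \<Rightarrow> (nat \<Rightarrow> nat) \<Rightarrow> nat set" where
  "descents n p = {i. 1 \<le> i \<and> i \<le> n - 1 \<and> p i > p (Suc i)}"

lemma maj_stat_descents: "maj_stat n p = \<Sum>(descents n p)"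
  by (simp add: maj_stat_def descents_def)

lemma finite_descents: "finite (descents n p)"
  by (rule finite_subset[of _ "{1..n}"]) (auto simp: descents_def)

lemma descents_bounds: "i \<in> descents N w \<Longrightarrow> 1 \<le> i \<and> i < N"
  by (auto simp: descents_def)

lemma descents_insert_top:
  assumes w: "\<And>i. 1 \<le> i \<Longrightarrow> i \<le> N \<Longrightarrow> w i \<le> N" and s: "s \<le> N"
  shows "descents (Suc N) (insert_top N s w) =
           {i \<in> descents N w. i < s} \<union> (if s < N then {Suc s} else {}) \<union>
           Suc ` {i \<in> descents N w. s < i}"
    (is "?D = ?L \<union> ?M \<union> Suc ` ?U")
proof (intro equalityI subsetI)
  let ?q = "insert_top N s w"
  fix i assume i: "i \<in> ?D"
  then have i1: "1 \<le> i" "i \<le> N" "?q i > ?q (Suc i)" by (auto simp: descents_def)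
  consider "i < s" | "i = s" | "i = Suc s" | "Suc s < i" by linarith
  then show "i \<in> ?L \<union> ?M \<union> Suc ` ?U"
  proof cases
    case 1 then show ?thesis using i1 s by (auto simp: descents_def insert_top_def)
  next
    case 2 then show ?thesis using i1 w[of s] by (auto simp: insert_top_def)
  next
    case 3 then show ?thesis using i1 by auto
  next
    case 4
    then have "i - 1 \<in> ?U" using i1 by (auto simp: descents_def insert_top_def)
    moreover have "i = Suc (i - 1)" using 4 by simp
    ultimately show ?thesis by blast
  qed
next
  let ?q = "insert_top N s w"
  fix i assume "i \<in> ?L \<union> ?M \<union> Suc ` ?U"
  then consider "i \<in> ?L" | "i \<in> ?M" | "i \<in> Suc ` ?U" by blast
  then show "i \<in> ?D"
  proof cases
    case 1 then show ?thesis by (auto simp: descents_def insert_top_def)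
  next
    case 2
    then have "i = Suc s" "s < N" by (auto split: if_splits)
    then show ?thesis using w[of "Suc s"] by (auto simp: descents_def insert_top_def)
  next
    case 3
    then obtain j where "j \<in> ?U" "i = Suc j" by auto
    then show ?thesis by (auto simp: descents_def insert_top_def)
  qed
qed

text \<open>The increase of the major index caused by inserting N+1 after the first s letters.\<close>
definition maj_shift :: "nat \<Rightarrow> nat \<Rightarrow> (nat \<Rightarrow> nat) \<Rightarrow> nat" where
  "maj_shift N s w = (if N \<le> s then 0
     else card {i \<in> descents N w. s < i} + (if s \<in> descents N w then 1 else Suc s))"

lemma sum_Suc_card: "finite U \<Longrightarrow> sum Suc U = \<Sum>U + card U"
  by (induction U rule: finite_induct) auto

lemma maj_stat_insert_top:
  assumes w: "\<And>i. 1 \<le> i \<Longrightarrow> i \<le> N \<Longrightarrow> w i \<le> N" and s: "s \<le> N"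
  shows "maj_stat (Suc N) (insert_top N s w) = maj_stat N w + maj_shift N s w"
proof -
  let ?D = "descents N w"
  define L where "L = {i \<in> ?D. i < s}"
  define U where "U = {i \<in> ?D. s < i}"
  define Ms where "Ms = (if s < N then {Suc s} else {})"
  have fin: "finite L" "finite U" "finite Ms" using finite_descents by (auto simp: L_def U_def Ms_def)
  have "descents (Suc N) (insert_top N s w) = L \<union> Ms \<union> Suc ` U"
    unfolding L_def U_def Ms_def by (rule descents_insert_top[OF w s])
  then have "maj_stat (Suc N) (insert_top N s w) = \<Sum>(L \<union> Ms \<union> Suc ` U)"
    by (simp add: maj_stat_descents)
  also have "\<dots> = \<Sum>L + \<Sum>Ms + \<Sum>(Suc ` U)"
    using fin by (subst sum.union_disjoint, auto simp: L_def U_def Ms_def sum.union_disjoint)+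
  also have "\<Sum>(Suc ` U) = \<Sum>U + card U"
    by (subst sum.reindex) (use fin in \<open>auto simp: sum_Suc_card\<close>)
  also have "\<Sum>Ms = (if s < N then Suc s else 0)" by (simp add: Ms_def)
  finally have new: "maj_stat (Suc N) (insert_top N s w) =
      \<Sum>L + (if s < N then Suc s else 0) + \<Sum>U + card U" by simp
  have D: "?D = L \<union> (?D \<inter> {s}) \<union> U" by (auto simp: L_def U_def)
  have "\<Sum>?D = \<Sum>L + \<Sum>(?D \<inter> {s}) + \<Sum>U"
    apply (subst D) using fin
    by (subst sum.union_disjoint, auto simp: L_def U_def sum.union_disjoint)+
  also have "\<Sum>(?D \<inter> {s}) = (if s \<in> ?D then s else 0)" by auto
  finally have old: "maj_stat N w = \<Sum>L + (if s \<in> ?D then s else 0) + \<Sum>U"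
    by (simp add: maj_stat_descents)
  show ?thesis
  proof (cases "s < N")
    case True
    then show ?thesis using new old by (auto simp: maj_shift_def U_def)
  next
    case False
    then have "U = {}" "s \<notin> ?D" by (auto simp: U_def dest: descents_bounds)
    then show ?thesis using new old False by (simp add: maj_shift_def)
  qed
qed

text \<open>For fixed w, the shifts s \<mapsto> maj_shift N s w are pairwise distinct and lie in {..N};
  so they enumerate {..N}.  Write c s for the number of descents beyond s.  On descents the
  shift is 1 + c s, which strictly decreases and stays below |D| + 1; on non-descents s < N it is
  s + 1 + c s, which strictly increases and is at least |D| + 1; at s = N it is 0.\<close>
context
  fixes N :: nat and w :: "nat \<Rightarrow> nat"
begin

private definition "c s = card {i \<in> descents N w. s < i}"

private lemma shift_descent: "s \<in> descents N w \<Longrightarrow> maj_shift N s w = Suc (c s)"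
  using descents_bounds[of s N w] by (auto simp: maj_shift_def c_def)

private lemma shift_non_descent:
  "s \<notin> descents N w \<Longrightarrow> s < N \<Longrightarrow> maj_shift N s w = Suc s + c s"
  by (auto simp: maj_shift_def c_def)

private lemma shift_last: "maj_shift N N w = 0"
  by (simp add: maj_shift_def)

private lemma c_le: "s < N \<Longrightarrow> c s \<le> N - 1 - s"
proof -
  assume "s < N"
  have "{i \<in> descents N w. s < i} \<subseteq> {Suc s..N-1}" by (auto dest: descents_bounds)
  then have "c s \<le> card {Suc s..N-1}" unfolding c_def by (rule card_mono[rotated]) simp
  then show ?thesis by simp
qed

private lemma c_descent: "s \<in> descents N w \<Longrightarrow> c s < card (descents N w)"
proof -
  assume "s \<in> descents N w"
  then have "{i \<in> descents N w. s < i} \<subset> descents N w" by auto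
  then show ?thesis unfolding c_def by (rule psubset_card_mono[OF finite_descents])
qed

private lemma c_non_descent:
  "s \<notin> descents N w \<Longrightarrow> card (descents N w) \<le> c s + s"
proof -
  assume s: "s \<notin> descents N w"
  have "descents N w \<subseteq> {i \<in> descents N w. s < i} \<union> {1..<s}"
  proof
    fix i assume i: "i \<in> descents N w"
    then have "1 \<le> i" "i \<noteq> s" using s descents_bounds by auto
    then show "i \<in> {i \<in> descents N w. s < i} \<union> {1..<s}" using i by auto
  qed
  then have "card (descents N w) \<le> card ({i \<in> descents N w. s < i} \<union> {1..<s})"
    by (rule card_mono[rotated]) (simp add: finite_descents)
  also have "\<dots> \<le> c s + card {1..<s}" unfolding c_def by (rule card_Un_le)
  finally show ?thesis by simp
qed

private lemma c_descent_mono: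
  "s < s' \<Longrightarrow> s' \<in> descents N w \<Longrightarrow> c s' < c s"
proof -
  assume a: "s < s'" "s' \<in> descents N w"
  have "{i \<in> descents N w. s' < i} \<subset> {i \<in> descents N w. s < i}" using a by auto
  then show ?thesis unfolding c_def by (rule psubset_card_mono[rotated]) (simp add: finite_descents)
qed

private lemma c_non_descent_mono:
  "s < s' \<Longrightarrow> s' \<notin> descents N w \<Longrightarrow> c s + s + 1 \<le> c s' + s'"
proof -
  assume a: "s < s'" "s' \<notin> descents N w"
  have "{i \<in> descents N w. s < i} \<subseteq> {i \<in> descents N w. s' < i} \<union> {s<..<s'}"
    using a by (auto simp: not_less order.order_iff_strict)
  then have "c s \<le> card ({i \<in> descents N w. s' < i} \<union> {s<..<s'})" unfolding c_def
    by (rule card_mono[rotated]) (simp add: finite_descents)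
  also have "\<dots> \<le> c s' + card {s<..<s'}" unfolding c_def by (rule card_Un_le)
  finally show ?thesis using a by simp
qed

private lemma shift_less_distinct:
  "s < s' \<Longrightarrow> s' \<le> N \<Longrightarrow> maj_shift N s w \<noteq> maj_shift N s' w"
proof -
  assume a: "s < s'" "s' \<le> N"
  then have sN: "s < N" by simp
  show ?thesis
  proof (cases "s' = N")
    case True
    then show ?thesis using shift_last shift_descent[of s] shift_non_descent[of s] sN
      by (cases "s \<in> descents N w") auto
  next
    case False
    then have s'N: "s' < N" using a by simp
    show ?thesis
    proof (cases "s \<in> descents N w"; cases "s' \<in> descents N w")
      assume "s \<in> descents N w" "s' \<in> descents N w"
      then show ?thesis using shift_descent c_descent_mono[OF a(1)] by fastforce
    next
      assume "s \<in> descents N w" "s' \<notin> descents N w"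
      then show ?thesis
        using shift_descent shift_non_descent[OF _ s'N] c_descent[of s] c_non_descent[of s'] by auto
    next
      assume "s \<notin> descents N w" "s' \<in> descents N w"
      then show ?thesis
        using shift_descent shift_non_descent[OF _ sN] c_descent[of s'] c_non_descent[of s] by auto
    next
      assume "s \<notin> descents N w" "s' \<notin> descents N w"
      then show ?thesis using shift_non_descent sN s'N c_non_descent_mono[OF a(1)] by auto
    qed
  qed
qed

lemma maj_shift_le: "s \<le> N \<Longrightarrow> maj_shift N s w \<le> N"
  using c_le[of s] by (cases "s = N") (auto simp: maj_shift_def c_def)

lemma maj_shift_bij: "bij_betw (\<lambda>s. maj_shift N s w) {..N} {..N}"
proof -
  have inj: "inj_on (\<lambda>s. maj_shift N s w) {..N}"
  proof (rule inj_onI)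
    fix s s' assume "s \<in> {..N}" "s' \<in> {..N}" "maj_shift N s w = maj_shift N s' w"
    then show "s = s'"
      using shift_less_distinct[of s s'] shift_less_distinct[of s' s]
      by (cases s s' rule: linorder_cases) auto
  qed
  then show ?thesis
    using endo_inj_surj[of "{..N}" "\<lambda>s. maj_shift N s w"] maj_shift_le by (auto simp: bij_betw_def)
qed

end

definition complement :: "nat \<Rightarrow> (nat \<Rightarrow> nat) \<Rightarrow> nat \<Rightarrow> nat" where
  "complement N w i = (if 1 \<le> i \<and> i \<le> N then Suc N - w i else i)"

lemma complement_permutes:
  assumes w: "w permutes {1..N}" shows "complement N w permutes {1..N}"
proof (rule bij_imp_permutes)
  have inj: "inj_on (complement N w) {1..N}"
  proof (rule inj_onI)
    fix i j assume "i \<in> {1..N}" "j \<in> {1..N}" "complement N w i = complement N w j"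
    then show "i = j"
      using permutes_interval_range[OF w, of i] permutes_interval_range[OF w, of j]
        permutes_interval_inj[OF w, of i j]
      by (auto simp: complement_def)
  qed
  have sub: "complement N w ` {1..N} \<subseteq> {1..N}"
  proof
    fix y assume "y \<in> complement N w ` {1..N}"
    then obtain i where "i \<in> {1..N}" "y = complement N w i" by auto
    then show "y \<in> {1..N}" using permutes_interval_range[OF w, of i] by (auto simp: complement_def)
  qed
  show "bij_betw (complement N w) {1..N} {1..N}"
    using inj endo_inj_surj[OF _ sub inj] by (simp add: bij_betw_def)
qed (auto simp: complement_def)

lemma complement_complement:
  assumes w: "w permutes {1..N}" shows "complement N (complement N w) = w"
proof
  fix i show "complement N (complement N w) i = w i"
    using permutes_interval_range[OF w, of i] permutes_not_in[OF w, of i] by (auto simp: complement_def)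
qed

lemma sum_perms_complement:
  fixes F :: "(nat \<Rightarrow> nat) \<Rightarrow> 'a::comm_monoid_add"
  shows "(\<Sum>w\<in>perms N. F (complement N w)) = (\<Sum>w\<in>perms N. F w)"
  by (rule sum.reindex_bij_witness[where i="complement N" and j="complement N"])
     (auto simp: perms_def complement_complement[simplified] complement_permutes[simplified])

lemma complement_less_iff:
  assumes w: "w permutes {1..N}" and "1 \<le> i" "i \<le> N" "1 \<le> j" "j \<le> N"
  shows "complement N w j < complement N w i \<longleftrightarrow> w i < w j"
proof -
  have "w i \<le> N" "w j \<le> N"
    using permutes_interval_range[OF w, of i] permutes_interval_range[OF w, of j] assms by auto
  then show ?thesis using assms by (simp add: complement_def) linarith
qed

definition index_pairs :: "nat \<Rightarrow> (nat \<times> nat) set" where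
  "index_pairs N = {(i, j). 1 \<le> i \<and> i < j \<and> j \<le> N}"

lemma finite_index_pairs: "finite (index_pairs N)"
  by (rule finite_subset[of _ "{1..N} \<times> {1..N}"]) (auto simp: index_pairs_def)

lemma card_index_pairs: "2 * card (index_pairs N) = N * (N - 1)"
proof (induction N)
  case 0
  have "index_pairs 0 = {}" by (auto simp: index_pairs_def)
  then show ?case by simp
next
  case (Suc N)
  have eq: "index_pairs (Suc N) = index_pairs N \<union> (\<lambda>i. (i, Suc N)) ` {1..N}"
    by (auto simp: index_pairs_def)
  have "card (index_pairs (Suc N)) = card (index_pairs N) + card ((\<lambda>i. (i, Suc N)) ` {1..N})"
    unfolding eq by (rule card_Un_disjoint[OF finite_index_pairs]) (auto simp: index_pairs_def)
  also have "card ((\<lambda>i. (i, Suc N)) ` {1..N}) = N" by (subst card_image) (auto simp: inj_on_def)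
  finally show ?case using Suc by (cases N) (auto simp: algebra_simps)
qed

lemma inv_stat_complement:
  assumes w: "w permutes {1..N}"
  shows "2 * real (inv_stat N (complement N w)) = real N * (real N - 1) - 2 * real (inv_stat N w)"
proof -
  have eq: "inv_pairs N (complement N w) = index_pairs N - inv_pairs N w"
  proof (intro equalityI subsetI)
    fix x assume "x \<in> inv_pairs N (complement N w)"
    then obtain i j where "x = (i,j)" "1 \<le> i" "i < j" "j \<le> N" "complement N w i > complement N w j"
      by (auto simp: inv_pairs_def)
    then show "x \<in> index_pairs N - inv_pairs N w"
      using complement_less_iff[OF w, of j i] by (auto simp: inv_pairs_def index_pairs_def)
  next
    fix x assume "x \<in> index_pairs N - inv_pairs N w"
    then obtain i j where ij: "x = (i,j)" "1 \<le> i" "i < j" "j \<le> N" "\<not> w i > w j"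
      by (auto simp: inv_pairs_def index_pairs_def)
    have "w i < w j" using ij permutes_interval_inj[OF w, of i j] by (cases "w i = w j") auto
    then show "x \<in> inv_pairs N (complement N w)"
      using ij complement_less_iff[OF w, of i j] by (auto simp: inv_pairs_def)
  qed
  have sub: "inv_pairs N w \<subseteq> index_pairs N" by (auto simp: inv_pairs_def index_pairs_def)
  have "card (inv_pairs N (complement N w)) = card (index_pairs N) - card (inv_pairs N w)"
    unfolding eq by (rule card_Diff_subset[OF finite_inv_pairs sub])
  moreover have "card (inv_pairs N w) \<le> card (index_pairs N)" by (rule card_mono[OF finite_index_pairs sub])
  moreover have "2 * real (card (index_pairs N)) = real N * (real N - 1)"
  proof -
    have "real (2 * card (index_pairs N)) = real (N * (N - 1))" using card_index_pairs[of N] by metis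
    then show ?thesis by (cases N) (simp_all add: algebra_simps)
  qed
  ultimately show ?thesis by (simp add: inv_stat_card of_nat_diff)
qed

lemma descents_complement:
  assumes w: "w permutes {1..N}"
  shows "descents N (complement N w) = {1..N-1} - descents N w"
proof (intro equalityI subsetI)
  fix i assume "i \<in> descents N (complement N w)"
  then show "i \<in> {1..N-1} - descents N w"
    using complement_less_iff[OF w, of "i" "Suc i"] by (auto simp: descents_def) linarith
next
  fix i assume "i \<in> {1..N-1} - descents N w"
  then show "i \<in> descents N (complement N w)"
    using complement_less_iff[OF w, of "i" "Suc i"] permutes_interval_inj[OF w, of i "Suc i"]
    by (auto simp: descents_def) (metis Suc_n_not_le_n linorder_neqE_nat not_less_eq_eq diff_Suc_1 le_diff_conv)
qed

lemma sum_atLeastAtMost_real: "2 * (\<Sum>i\<in>{1..n}. real i) = real n * (real n + 1)"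
  by (induction n) (auto simp: algebra_simps)

lemma maj_stat_complement:
  assumes w: "w permutes {1..N}"
  shows "2 * real (maj_stat N (complement N w)) = real N * (real N - 1) - 2 * real (maj_stat N w)"
proof -
  have sub: "descents N w \<subseteq> {1..N-1}" by (auto simp: descents_def)
  have "real (\<Sum>(descents N (complement N w))) = (\<Sum>i\<in>{1..N-1}. real i) - (\<Sum>i\<in>descents N w. real i)"
    unfolding descents_complement[OF w] of_nat_sum by (rule sum_diff[OF _ sub]) simp
  moreover have "2 * (\<Sum>i\<in>{1..N-1}. real i) = real N * (real N - 1)"
    using sum_atLeastAtMost_real[of "N - 1"] by (cases N) (auto simp: algebra_simps)
  ultimately show ?thesis by (simp add: maj_stat_descents of_nat_sum algebra_simps)
qed

text \<open>For s < N the shifts of w and of its complement add up to N + 1: the descents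
  beyond s of w and of its complement partition {s+1..N-1}, and s is a descent of exactly one of
  them unless s = 0.\<close>
lemma maj_shift_complement:
  assumes w: "w permutes {1..N}" and s: "s < N"
  shows "real (maj_shift N s w) + real (maj_shift N s (complement N w)) = real N + 1"
proof -
  let ?D = "descents N w" and ?D' = "descents N (complement N w)"
  have D': "?D' = {1..N-1} - ?D" by (rule descents_complement[OF w])
  have "{i \<in> ?D. s < i} \<union> {i \<in> ?D'. s < i} = {Suc s..N-1}"
    unfolding D' by (auto simp: descents_def)
  moreover have "{i \<in> ?D. s < i} \<inter> {i \<in> ?D'. s < i} = {}" unfolding D' by auto
  ultimately have "card {i \<in> ?D. s < i} + card {i \<in> ?D'. s < i} = N - 1 - s"
    using finite_descents card_Un_disjoint[of "{i \<in> ?D. s < i}" "{i \<in> ?D'. s < i}"] by simp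
  moreover have "s \<in> ?D' \<longleftrightarrow> 1 \<le> s \<and> s \<notin> ?D" using s unfolding D' by auto
  moreover have "s \<in> ?D \<Longrightarrow> 1 \<le> s" by (auto simp: descents_def)
  ultimately show ?thesis using s by (auto simp: maj_shift_def)
qed

definition inv_c :: "nat \<Rightarrow> (nat \<Rightarrow> nat) \<Rightarrow> real" where
  "inv_c N w = real (inv_stat N w) - mean_n N"

definition maj_c :: "nat \<Rightarrow> (nat \<Rightarrow> nat) \<Rightarrow> real" where
  "maj_c N w = real (maj_stat N w) - mean_n N"

definition inv_shift_c :: "nat \<Rightarrow> nat \<Rightarrow> real" where
  "inv_shift_c N s = real (N - s) - real N / 2"

definition maj_shift_c :: "nat \<Rightarrow> nat \<Rightarrow> (nat \<Rightarrow> nat) \<Rightarrow> real" where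
  "maj_shift_c N s w = real (maj_shift N s w) - real N / 2"

lemma perms_le:
  "w \<in> perms N \<Longrightarrow> 1 \<le> i \<Longrightarrow> i \<le> N \<Longrightarrow> w i \<le> N"
  unfolding perms_def using permutes_interval_range by blast

lemma mean_Suc: "mean_n (Suc N) = mean_n N + real N / 2"
  by (simp add: mean_n_def field_simps)

lemma inv_c_insert_top:
  "w \<in> perms N \<Longrightarrow> s \<le> N \<Longrightarrow> inv_c (Suc N) (insert_top N s w) = inv_c N w + inv_shift_c N s"
  unfolding inv_c_def inv_shift_c_def using inv_stat_insert_top[of N w s] perms_le[of w N]
  by (simp add: mean_Suc of_nat_diff)

lemma maj_c_insert_top:
  "w \<in> perms N \<Longrightarrow> s \<le> N \<Longrightarrow> maj_c (Suc N) (insert_top N s w) = maj_c N w + maj_shift_c N s w"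
  unfolding maj_c_def maj_shift_c_def using maj_stat_insert_top[of N w s] perms_le[of w N]
  by (simp add: mean_Suc)

lemma inv_c_complement: "w \<in> perms N \<Longrightarrow> inv_c N (complement N w) = - inv_c N w"
  using inv_stat_complement[of w N] by (simp add: inv_c_def mean_n_def perms_def field_simps)

lemma maj_c_complement: "w \<in> perms N \<Longrightarrow> maj_c N (complement N w) = - maj_c N w"
  using maj_stat_complement[of w N] by (simp add: maj_c_def mean_n_def perms_def field_simps)

text \<open>Since
  s \<mapsto> N - s and s \<mapsto> maj_shift N s w are bijections of {..N}, each shift alone is
  uniformly distributed on {0..N} - N/2, so its first two moments are explicit.\<close>

definition shift_moment :: "nat \<Rightarrow> nat \<Rightarrow> nat \<Rightarrow> (nat \<Rightarrow> nat) \<Rightarrow> real" where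
  "shift_moment N p q w = (\<Sum>s\<le>N. inv_shift_c N s ^ p * maj_shift_c N s w ^ q)"

lemma sum_atMost_reverse: "(\<Sum>s\<le>N. g (N - s)) = (\<Sum>t\<le>(N::nat). g t)"
  using sum.nat_diff_reindex[of "g" "Suc N"] by (simp add: lessThan_Suc_atMost)

lemma sum_inv_shift_c: "(\<Sum>s\<le>N. g (inv_shift_c N s)) = (\<Sum>t\<le>N. g (real t - real N / 2))"
  unfolding inv_shift_c_def by (rule sum_atMost_reverse)

lemma sum_maj_shift: "(\<Sum>s\<le>N. g (maj_shift N s w)) = (\<Sum>t\<le>N. g t)"
  by (rule sum.reindex_bij_betw[OF maj_shift_bij])

lemma sum_maj_shift_c:
  "(\<Sum>s\<le>N. g (maj_shift_c N s w)) = (\<Sum>t\<le>N. g (real t - real N / 2))"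
  unfolding maj_shift_c_def by (rule sum_maj_shift)

lemma sum_atMost_real: "(\<Sum>t\<le>N. real t) = real N * (real N + 1) / 2"
  by (induction N) (auto simp: algebra_simps add_divide_distrib)

lemma sum_atMost_sq_real: "(\<Sum>t\<le>N. real t ^ 2) = real N * (real N + 1) * (2 * real N + 1) / 6"
  by (induction N) (auto simp: algebra_simps add_divide_distrib power2_eq_square)

lemma sum_centred: "(\<Sum>t\<le>N. real t - real N / 2) = 0"
  by (simp add: sum_subtractf sum_atMost_real algebra_simps)

lemma sum_centred_sq:
  "(\<Sum>t\<le>N. (real t - real N / 2) ^ 2) = (real N + 1) * (real N * (real N + 2) / 12)"
proof -
  have "(\<Sum>t\<le>N. (real t - real N / 2) ^ 2) = (\<Sum>t\<le>N. (real t ^ 2 - real N * real t) + (real N / 2) ^ 2)"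
    by (rule sum.cong[OF refl]) (simp add: power2_diff algebra_simps power2_eq_square)
  also have "\<dots> = (\<Sum>t\<le>N. real t ^ 2) - real N * (\<Sum>t\<le>N. real t) + (real N + 1) * (real N / 2) ^ 2"
    by (simp add: sum.distrib sum_subtractf sum_distrib_left)
  also have "\<dots> = (real N + 1) * (real N * (real N + 2) / 12)"
    unfolding sum_atMost_real sum_atMost_sq_real by (simp add: field_simps power2_eq_square)
  finally show ?thesis .
qed

lemma shift_moment_00: "shift_moment N 0 0 w = real N + 1" by (simp add: shift_moment_def)

lemma shift_moment_10:
  "shift_moment N 1 0 w = 0" by (simp add: shift_moment_def sum_inv_shift_c[of "\<lambda>x. x"] sum_centred)

lemma shift_moment_01:
  "shift_moment N 0 1 w = 0" by (simp add: shift_moment_def sum_maj_shift_c[of "\<lambda>x. x"] sum_centred)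

lemma shift_moment_20: "shift_moment N 2 0 w = (real N + 1) * (real N * (real N + 2) / 12)"
  by (simp add: shift_moment_def sum_inv_shift_c[of "\<lambda>x. x ^ 2"] sum_centred_sq)

lemma shift_moment_02: "shift_moment N 0 2 w = (real N + 1) * (real N * (real N + 2) / 12)"
  by (simp add: shift_moment_def sum_maj_shift_c[of "\<lambda>x. x ^ 2"] sum_centred_sq)

lemma inv_shift_c_bound: "s \<le> N \<Longrightarrow> \<bar>inv_shift_c N s\<bar> \<le> real N / 2"
  by (auto simp: inv_shift_c_def of_nat_diff abs_if)

lemma maj_shift_c_bound: "s \<le> N \<Longrightarrow> \<bar>maj_shift_c N s w\<bar> \<le> real N / 2"
  using maj_shift_le[of s N w] by (auto simp: maj_shift_c_def abs_if)

lemma shift_moment_bound: "\<bar>shift_moment N p q w\<bar> \<le> (real N + 1) * (real N / 2) ^ (p + q)"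
proof -
  have "\<bar>shift_moment N p q w\<bar> \<le> (\<Sum>s\<le>N. \<bar>inv_shift_c N s ^ p * maj_shift_c N s w ^ q\<bar>)"
    unfolding shift_moment_def by (rule sum_abs)
  also have "\<dots> \<le> (\<Sum>s\<le>N. (real N / 2) ^ (p + q))"
  proof (rule sum_mono)
    fix s assume "s \<in> {..N}"
    then have "\<bar>inv_shift_c N s\<bar> ^ p \<le> (real N / 2) ^ p" "\<bar>maj_shift_c N s w\<bar> ^ q \<le> (real N / 2) ^ q"
      by (auto intro!: power_mono inv_shift_c_bound maj_shift_c_bound)
    then show "\<bar>inv_shift_c N s ^ p * maj_shift_c N s w ^ q\<bar> \<le> (real N / 2) ^ (p + q)"
      by (simp add: abs_mult power_abs power_add mult_mono zero_le_power)
  qed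
  finally show ?thesis by (simp add: algebra_simps)
qed

text \<open>The mixed shift moment depends on w, but averaged against the complement it is explicit:
  the maj-shifts of w and of its complement add up to N + 1 except at s = N.\<close>

lemma shift_moment_11_complement:
  "w \<in> perms N \<Longrightarrow> shift_moment N 1 1 w + shift_moment N 1 1 (complement N w) = real N * (real N + 1) / 2"
proof -
  assume w: "w \<in> perms N"
  have "shift_moment N 1 1 w + shift_moment N 1 1 (complement N w) = (\<Sum>s\<le>N. inv_shift_c N s * (real (maj_shift N s w) + real (maj_shift N s (complement N w)) - real N))"
    by (simp add: shift_moment_def maj_shift_c_def sum.distrib[symmetric] algebra_simps)
  also have "\<dots> = (\<Sum>s\<le>N. inv_shift_c N s * (1 - (real N + 1) * (if s = N then 1 else 0)))"
  proof (rule sum.cong[OF refl])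
    fix s assume s: "s \<in> {..N}"
    have "real (maj_shift N s w) + real (maj_shift N s (complement N w)) - real N =
        1 - (real N + 1) * (if s = N then 1 else 0)"
    proof (cases "s = N")
      case True then show ?thesis by (simp add: maj_shift_def)
    next
      case False then show ?thesis using maj_shift_complement[of w N s] w s by (simp add: perms_def)
    qed
    then show "inv_shift_c N s * (real (maj_shift N s w) + real (maj_shift N s (complement N w)) - real N) = inv_shift_c N s * (1 - (real N + 1) * (if s = N then 1 else 0))"
      by simp
  qed
  also have "\<dots> = (\<Sum>s\<le>N. inv_shift_c N s - (real N + 1) * (if s = N then inv_shift_c N s else 0))"
    by (rule sum.cong) (auto simp: algebra_simps)
  also have "\<dots> = (\<Sum>s\<le>N. inv_shift_c N s) - (real N + 1) * inv_shift_c N N"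
    by (simp only: sum_subtractf sum_distrib_left[symmetric] sum.delta finite_atMost atMost_iff order_refl if_True)
  also have "\<dots> = real N * (real N + 1) / 2"
    using sum_inv_shift_c[of "\<lambda>x. x" N] sum_centred[of N] by (simp add: inv_shift_c_def algebra_simps)
  finally show ?thesis .
qed

definition power_sum :: "nat \<Rightarrow> nat \<Rightarrow> nat \<Rightarrow> real" where
  "power_sum N a b = (\<Sum>w\<in>perms N. inv_c N w ^ a * maj_c N w ^ b)"

lemma sum_rotate3:
  "(\<Sum>s\<in>Z. \<Sum>p\<in>X. \<Sum>q\<in>Y. f s p q) = (\<Sum>p\<in>X. \<Sum>q\<in>Y. \<Sum>s\<in>Z. f s p q)"
proof -
  have "(\<Sum>s\<in>Z. \<Sum>p\<in>X. \<Sum>q\<in>Y. f s p q) = (\<Sum>p\<in>X. \<Sum>s\<in>Z. \<Sum>q\<in>Y. f s p q)" by (rule sum.swap)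
  also have "\<dots> = (\<Sum>p\<in>X. \<Sum>q\<in>Y. \<Sum>s\<in>Z. f s p q)" by (rule sum.cong[OF refl], rule sum.swap)
  finally show ?thesis .
qed

lemma power_sum_Suc:
  "power_sum (Suc N) a b = (\<Sum>p\<le>a. \<Sum>q\<le>b. real (a choose p) * real (b choose q) *
    (\<Sum>w\<in>perms N. inv_c N w ^ (a - p) * maj_c N w ^ (b - q) * shift_moment N p q w))"
proof -
  have "power_sum (Suc N) a b = (\<Sum>w\<in>perms N. \<Sum>s\<le>N. (inv_c N w + inv_shift_c N s) ^ a * (maj_c N w + maj_shift_c N s w) ^ b)"
    unfolding power_sum_def sum_perms_Suc by (intro sum.cong refl) (simp add: inv_c_insert_top maj_c_insert_top)
  also have "\<dots> = (\<Sum>w\<in>perms N. \<Sum>s\<le>N. \<Sum>p\<le>a. \<Sum>q\<le>b. real (a choose p) * real (b choose q) *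
      (inv_c N w ^ (a - p) * maj_c N w ^ (b - q) * (inv_shift_c N s ^ p * maj_shift_c N s w ^ q)))"
  proof (intro sum.cong refl)
    fix w s
    have "(inv_c N w + inv_shift_c N s) ^ a * (maj_c N w + maj_shift_c N s w) ^ b =
      (\<Sum>p\<le>a. real (a choose p) * inv_shift_c N s ^ p * inv_c N w ^ (a - p)) *
      (\<Sum>q\<le>b. real (b choose q) * maj_shift_c N s w ^ q * maj_c N w ^ (b - q))"
      by (simp only: add.commute[of "inv_c N w"] add.commute[of "maj_c N w"] binomial_ring)
    also have "\<dots> = (\<Sum>p\<le>a. \<Sum>q\<le>b. real (a choose p) * real (b choose q) *
      (inv_c N w ^ (a - p) * maj_c N w ^ (b - q) * (inv_shift_c N s ^ p * maj_shift_c N s w ^ q)))"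
      by (simp add: sum_product mult_ac)
    finally show "(inv_c N w + inv_shift_c N s) ^ a * (maj_c N w + maj_shift_c N s w) ^ b = \<dots>" .
  qed
  also have "\<dots> = (\<Sum>w\<in>perms N. \<Sum>p\<le>a. \<Sum>q\<le>b. \<Sum>s\<le>N. real (a choose p) * real (b choose q) *
      (inv_c N w ^ (a - p) * maj_c N w ^ (b - q) * (inv_shift_c N s ^ p * maj_shift_c N s w ^ q)))"
    by (rule sum.cong[OF refl], rule sum_rotate3)
  also have "\<dots> = (\<Sum>p\<le>a. \<Sum>q\<le>b. \<Sum>w\<in>perms N. real (a choose p) * real (b choose q) *
      (inv_c N w ^ (a - p) * maj_c N w ^ (b - q) * shift_moment N p q w))"
    by (simp add: sum.swap[of _ "perms N"] shift_moment_def sum_distrib_left)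
  finally show ?thesis by (simp add: sum_distrib_left)
qed

lemma power_sum_odd: "odd (a + b) \<Longrightarrow> power_sum N a b = 0"
proof -
  assume o: "odd (a + b)"
  have "power_sum N a b = (\<Sum>w\<in>perms N. inv_c N (complement N w) ^ a * maj_c N (complement N w) ^ b)"
    unfolding power_sum_def by (rule sum_perms_complement[symmetric])
  also have "\<dots> = (\<Sum>w\<in>perms N. - (inv_c N w ^ a * maj_c N w ^ b))"
  proof (rule sum.cong[OF refl])
    fix w assume "w \<in> perms N"
    then have "inv_c N (complement N w) ^ a * maj_c N (complement N w) ^ b = (-1) ^ (a + b) * (inv_c N w ^ a * maj_c N w ^ b)"
      by (simp add: inv_c_complement maj_c_complement power_minus' power_add mult_ac)
    then show "inv_c N (complement N w) ^ a * maj_c N (complement N w) ^ b = - (inv_c N w ^ a * maj_c N w ^ b)" using o by simp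
  qed
  also have "\<dots> = - power_sum N a b" by (simp add: power_sum_def sum_negf)
  finally show ?thesis by simp
qed

lemma sum_shift_moment_11:
  "even (i + j) \<Longrightarrow> (\<Sum>w\<in>perms N. inv_c N w ^ i * maj_c N w ^ j * shift_moment N 1 1 w) = real N * (real N + 1) / 4 * power_sum N i j"
proof -
  assume e: "even (i + j)"
  let ?f = "\<lambda>w. inv_c N w ^ i * maj_c N w ^ j"
  have inv: "?f (complement N w) = ?f w" if "w \<in> perms N" for w
  proof -
    have "?f (complement N w) = (-1) ^ (i + j) * ?f w"
      using that by (simp add: inv_c_complement maj_c_complement power_minus' power_add mult_ac)
    then show ?thesis using e by simp
  qed
  have "(\<Sum>w\<in>perms N. ?f w * shift_moment N 1 1 w) = (\<Sum>w\<in>perms N. ?f (complement N w) * shift_moment N 1 1 (complement N w))"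
    by (rule sum_perms_complement[symmetric])
  also have "\<dots> = (\<Sum>w\<in>perms N. ?f w * shift_moment N 1 1 (complement N w))"
    by (rule sum.cong[OF refl]) (simp add: inv)
  finally have "2 * (\<Sum>w\<in>perms N. ?f w * shift_moment N 1 1 w) = (\<Sum>w\<in>perms N. ?f w * (shift_moment N 1 1 w + shift_moment N 1 1 (complement N w)))"
    by (simp add: sum.distrib algebra_simps)
  also have "\<dots> = (\<Sum>w\<in>perms N. ?f w * (real N * (real N + 1) / 2))"
    by (rule sum.cong[OF refl]) (simp only: shift_moment_11_complement)
  also have "\<dots> = (\<Sum>w\<in>perms N. ?f w) * (real N * (real N + 1) / 2)"
    by (simp add: sum_distrib_right)
  finally have "2 * (\<Sum>w\<in>perms N. ?f w * shift_moment N 1 1 w) = power_sum N i j * (real N * (real N + 1) / 2)"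
    by (simp add: power_sum_def)
  then show ?thesis by (simp add: field_simps)
qed

text \<open>Dividing the recursion by (N+1)! expresses moment (N+1) a b as a
  combination of the terms rec_term N a b p q; the terms with p + q \<le> 2 are explicit and the
  others are bounded by absolute moments.  var_incr N is the variance of the uniform distribution
  on {0..N}.\<close>

definition moment :: "nat \<Rightarrow> nat \<Rightarrow> nat \<Rightarrow> real" where
  "moment N a b = power_sum N a b / fact N"

definition var_incr :: "nat \<Rightarrow> real" where
  "var_incr N = real N * (real N + 2) / 12"

definition rec_term :: "nat \<Rightarrow> nat \<Rightarrow> nat \<Rightarrow> nat \<Rightarrow> nat \<Rightarrow> real" where
  "rec_term N a b p q = (\<Sum>w\<in>perms N. inv_c N w ^ (a - p) * maj_c N w ^ (b - q) * shift_moment N p q w) / fact (Suc N)"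

definition abs_moment :: "nat \<Rightarrow> nat \<Rightarrow> nat \<Rightarrow> real" where
  "abs_moment N i j = (\<Sum>w\<in>perms N. \<bar>inv_c N w\<bar> ^ i * \<bar>maj_c N w\<bar> ^ j) / fact N"

lemma moment_00: "moment N 0 0 = 1"
  by (simp add: moment_def power_sum_def card_perms)

lemma sum_sum_divide:
  "(\<Sum>p\<in>X. \<Sum>q\<in>Y. c p q * g p q) / (F::real) = (\<Sum>p\<in>X. \<Sum>q\<in>Y. c p q * (g p q / F))"
  by (simp add: sum_divide_distrib)

lemma moment_Suc:
  "moment (Suc N) a b = (\<Sum>p\<le>a. \<Sum>q\<le>b. real (a choose p) * real (b choose q) * rec_term N a b p q)"
  unfolding moment_def power_sum_Suc sum_sum_divide unfolding rec_term_def ..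

lemma fact_Suc_real: "(fact (Suc N) :: real) = (real N + 1) * fact N"
  by (simp add: algebra_simps)

lemma rec_term_00: "rec_term N a b 0 0 = moment N a b"
proof -
  have "(\<Sum>w\<in>perms N. inv_c N w ^ (a - 0) * maj_c N w ^ (b - 0) * shift_moment N 0 0 w) = power_sum N a b * (real N + 1)"
    unfolding power_sum_def shift_moment_00 by (simp add: sum_distrib_right)
  then show ?thesis unfolding rec_term_def moment_def fact_Suc_real by simp
qed

lemma rec_term_10: "rec_term N a b 1 0 = 0" unfolding rec_term_def shift_moment_10 by simp

lemma rec_term_01: "rec_term N a b 0 1 = 0" unfolding rec_term_def shift_moment_01 by simp

lemma rec_term_20: "rec_term N a b 2 0 = var_incr N * moment N (a - 2) b"
proof -
  have "(\<Sum>w\<in>perms N. inv_c N w ^ (a - 2) * maj_c N w ^ (b - 0) * shift_moment N 2 0 w) = power_sum N (a - 2) b * ((real N + 1) * var_incr N)"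
    unfolding power_sum_def shift_moment_20 var_incr_def by (simp add: sum_distrib_right)
  then show ?thesis unfolding rec_term_def moment_def fact_Suc_real by simp
qed

lemma rec_term_02: "rec_term N a b 0 2 = var_incr N * moment N a (b - 2)"
proof -
  have "(\<Sum>w\<in>perms N. inv_c N w ^ (a - 0) * maj_c N w ^ (b - 2) * shift_moment N 0 2 w) = power_sum N a (b - 2) * ((real N + 1) * var_incr N)"
    unfolding power_sum_def shift_moment_02 var_incr_def by (simp add: sum_distrib_right)
  then show ?thesis unfolding rec_term_def moment_def fact_Suc_real by simp
qed

lemma rec_term_11:
  "even (a + b) \<Longrightarrow> 1 \<le> a \<Longrightarrow> 1 \<le> b \<Longrightarrow> rec_term N a b 1 1 = real N / 4 * moment N (a - 1) (b - 1)"
proof -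
  assume e: "even (a + b)" "1 \<le> a" "1 \<le> b"
  then have e': "even ((a - 1) + (b - 1))" by simp
  have H: "(\<Sum>w\<in>perms N. inv_c N w ^ (a - 1) * maj_c N w ^ (b - 1) * shift_moment N 1 1 w) = (real N + 1) * (real N / 4 * power_sum N (a - 1) (b - 1))"
    using sum_shift_moment_11[OF e', of N] by (simp add: algebra_simps)
  show ?thesis unfolding rec_term_def moment_def fact_Suc_real H by simp
qed

lemma rec_term_bound:
  "\<bar>rec_term N a b p q\<bar> \<le> (real N / 2) ^ (p + q) * abs_moment N (a - p) (b - q)"
proof -
  have "\<bar>\<Sum>w\<in>perms N. inv_c N w ^ (a - p) * maj_c N w ^ (b - q) * shift_moment N p q w\<bar> \<le>
      (\<Sum>w\<in>perms N. \<bar>inv_c N w\<bar> ^ (a - p) * \<bar>maj_c N w\<bar> ^ (b - q) * ((real N + 1) * (real N / 2) ^ (p + q)))"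
  proof (rule order.trans[OF sum_abs], rule sum_mono)
    fix w
    show "\<bar>inv_c N w ^ (a - p) * maj_c N w ^ (b - q) * shift_moment N p q w\<bar> \<le> \<bar>inv_c N w\<bar> ^ (a - p) * \<bar>maj_c N w\<bar> ^ (b - q) * ((real N + 1) * (real N / 2) ^ (p + q))"
      by (simp add: abs_mult power_abs shift_moment_bound mult_left_mono)
  qed
  also have "\<dots> = (real N + 1) * (real N / 2) ^ (p + q) * (\<Sum>w\<in>perms N. \<bar>inv_c N w\<bar> ^ (a - p) * \<bar>maj_c N w\<bar> ^ (b - q))"
    by (simp add: sum_distrib_left sum_distrib_right mult_ac)
  finally have H: "\<bar>\<Sum>w\<in>perms N. inv_c N w ^ (a - p) * maj_c N w ^ (b - q) * shift_moment N p q w\<bar> \<le> (real N + 1) * (real N / 2) ^ (p + q) * (\<Sum>w\<in>perms N. \<bar>inv_c N w\<bar> ^ (a - p) * \<bar>maj_c N w\<bar> ^ (b - q))" .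
  have F: "(0::real) < (real N + 1) * fact N" by simp
  have "\<bar>rec_term N a b p q\<bar> = \<bar>\<Sum>w\<in>perms N. inv_c N w ^ (a - p) * maj_c N w ^ (b - q) * shift_moment N p q w\<bar> / ((real N + 1) * fact N)"
    unfolding rec_term_def fact_Suc_real abs_divide using F by simp
  also have "\<dots> \<le> (real N + 1) * (real N / 2) ^ (p + q) * (\<Sum>w\<in>perms N. \<bar>inv_c N w\<bar> ^ (a - p) * \<bar>maj_c N w\<bar> ^ (b - q)) / ((real N + 1) * fact N)"
    by (rule divide_right_mono[OF H]) (use F in simp)
  also have "\<dots> = (real N / 2) ^ (p + q) * abs_moment N (a - p) (b - q)"
    unfolding abs_moment_def by simp
  finally show ?thesis .
qed

lemma power_abs_bound:
  fixes x y \<sigma> :: real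
  assumes s: "\<sigma> > 0" and ij: "i + j \<le> m" and m: "even m"
  shows "\<bar>x\<bar> ^ i * \<bar>y\<bar> ^ j \<le> \<sigma> ^ (i + j) * (1 + (x / \<sigma>) ^ m + (y / \<sigma>) ^ m)"
proof -
  define X where "X = \<bar>x\<bar> / \<sigma>"
  define Y where "Y = \<bar>y\<bar> / \<sigma>"
  define Mx where "Mx = max X Y"
  have X0: "X \<ge> 0" "Y \<ge> 0" using s by (auto simp: X_def Y_def)
  have "(x / \<sigma>) ^ m = \<bar>x / \<sigma>\<bar> ^ m" "(y / \<sigma>) ^ m = \<bar>y / \<sigma>\<bar> ^ m"
    using power_even_abs[OF m, symmetric] by blast+
  then have xm: "(x / \<sigma>) ^ m = X ^ m" "(y / \<sigma>) ^ m = Y ^ m"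
    using s by (simp_all add: X_def Y_def abs_divide)
  have xX: "\<bar>x\<bar> = \<sigma> * X" "\<bar>y\<bar> = \<sigma> * Y" using s by (auto simp: X_def Y_def)
  have "X ^ i * Y ^ j \<le> Mx ^ i * Mx ^ j"
    using X0 by (intro mult_mono power_mono) (auto simp: Mx_def)
  also have "\<dots> = Mx ^ (i + j)" by (simp add: power_add)
  also have "\<dots> \<le> 1 + X ^ m + Y ^ m"
  proof (cases "Mx \<le> 1")
    case True
    then have "Mx ^ (i + j) \<le> 1" using X0 by (intro power_le_one) (auto simp: Mx_def)
    then show ?thesis using X0 by (simp add: add_increasing2)
  next
    case False
    then have "Mx ^ (i + j) \<le> Mx ^ m" using ij by (intro power_increasing) auto
    also have "\<dots> \<le> X ^ m + Y ^ m" using X0 by (auto simp: Mx_def max_def)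
    finally show ?thesis by simp
  qed
  finally have "X ^ i * Y ^ j \<le> 1 + X ^ m + Y ^ m" .
  then have "\<sigma> ^ (i + j) * (X ^ i * Y ^ j) \<le> \<sigma> ^ (i + j) * (1 + X ^ m + Y ^ m)"
    using s by (intro mult_left_mono) auto
  then show ?thesis using xX xm by (simp add: power_mult_distrib power_add mult_ac)
qed

lemma abs_moment_bound:
  assumes s: "\<sigma> > 0" and ij: "i + j \<le> m" and m: "even m"
  shows "abs_moment N i j \<le> \<sigma> ^ (i + j) * (1 + moment N m 0 / \<sigma> ^ m + moment N 0 m / \<sigma> ^ m)"
proof -
  have "(\<Sum>w\<in>perms N. \<bar>inv_c N w\<bar> ^ i * \<bar>maj_c N w\<bar> ^ j) \<le>
      (\<Sum>w\<in>perms N. \<sigma> ^ (i + j) * (1 + (inv_c N w / \<sigma>) ^ m + (maj_c N w / \<sigma>) ^ m))"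
    by (rule sum_mono) (rule power_abs_bound[OF s ij m])
  also have "\<dots> = \<sigma> ^ (i + j) * (\<Sum>w\<in>perms N. (1 + (inv_c N w / \<sigma>) ^ m + (maj_c N w / \<sigma>) ^ m))"
    by (simp add: sum_distrib_left)
  also have "(\<Sum>w\<in>perms N. (1 + (inv_c N w / \<sigma>) ^ m + (maj_c N w / \<sigma>) ^ m)) = fact N + power_sum N m 0 / \<sigma> ^ m + power_sum N 0 m / \<sigma> ^ m"
    by (simp add: sum.distrib power_sum_def power_divide sum_divide_distrib card_perms)
  finally show ?thesis unfolding abs_moment_def moment_def
    by (simp add: divide_right_mono field_simps)
qed

lemma telescoping_increment_bound:
  fixes z y :: "nat \<Rightarrow> real"
  assumes step: "\<And>n. n \<ge> m \<Longrightarrow> \<bar>z (Suc n) - z n\<bar> \<le> e * (y (Suc n) - y n)"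
  shows "\<bar>z (m + k) - z m\<bar> \<le> e * (y (m + k) - y m)"
proof (induction k)
  case 0 then show ?case by simp
next
  case (Suc k)
  have "\<bar>z (m + Suc k) - z m\<bar> \<le> \<bar>z (Suc (m + k)) - z (m + k)\<bar> + \<bar>z (m + k) - z m\<bar>" by simp
  also have "\<dots> \<le> e * (y (Suc (m + k)) - y (m + k)) + e * (y (m + k) - y m)"
    using step[of "m + k"] Suc by simp
  finally show ?case by (simp add: algebra_simps)
qed

lemma stolz_cesaro_zero:
  fixes z y :: "nat \<Rightarrow> real"
  assumes ymono: "\<And>n. n \<ge> n0 \<Longrightarrow> y n < y (Suc n)"
    and inf: "filterlim y at_top sequentially"
    and lim: "(\<lambda>n. (z (Suc n) - z n) / (y (Suc n) - y n)) \<longlonglongrightarrow> 0"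
  shows "(\<lambda>n. z n / y n) \<longlonglongrightarrow> 0"
proof (rule LIMSEQ_I)
  fix r :: real assume r: "r > 0"
  define e where "e = r / 2"
  have e: "e > 0" using r by (simp add: e_def)
  obtain n1 where n1: "\<And>n. n \<ge> n1 \<Longrightarrow> norm ((z (Suc n) - z n) / (y (Suc n) - y n)) < e"
    using LIMSEQ_D[OF lim e] by auto
  obtain n2 where n2: "\<And>n. n \<ge> n2 \<Longrightarrow> y n \<ge> 1"
    using inf unfolding filterlim_at_top eventually_sequentially by blast
  define m where "m = max n0 (max n1 n2)"
  have step: "\<bar>z (Suc n) - z n\<bar> \<le> e * (y (Suc n) - y n)" if "n \<ge> m" for n
  proof -
    have d: "y (Suc n) - y n > 0" using ymono[of n] that by (simp add: m_def)
    have "\<bar>z (Suc n) - z n\<bar> / (y (Suc n) - y n) < e" using n1[of n] that d by (simp add: m_def abs_divide)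
    then show ?thesis using d by (simp add: divide_less_eq)
  qed
  have tel: "\<bar>z (m + k) - z m\<bar> \<le> e * (y (m + k) - y m)" for k
    using step by (rule telescoping_increment_bound)
  have ym: "y m \<ge> 1" using n2 by (simp add: m_def)
  obtain n3 where n3: "\<And>n. n \<ge> n3 \<Longrightarrow> y n \<ge> (\<bar>z m\<bar> + 1) / e"
    using inf unfolding filterlim_at_top eventually_sequentially by blast
  show "\<exists>no. \<forall>n\<ge>no. norm (z n / y n - 0) < r"
  proof (intro exI allI impI)
    fix n assume n: "n \<ge> max m n3"
    then obtain k where k: "n = m + k" by (metis le_Suc_ex max.boundedE)
    have yn: "y n \<ge> (\<bar>z m\<bar> + 1) / e" using n3 n by simp
    have ypos: "y n > 0"
    proof -
      have "(\<bar>z m\<bar> + 1) / e > 0" using e by (simp add: add_pos_nonneg)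
      then show ?thesis using yn by linarith
    qed
    have t: "\<bar>z n - z m\<bar> \<le> e * (y n - y m)" using tel[of k] k by simp
    have "\<bar>z n\<bar> \<le> \<bar>z m\<bar> + \<bar>z n - z m\<bar>" by (metis abs_triangle_ineq add.commute diff_add_cancel)
    then have "\<bar>z n\<bar> \<le> \<bar>z m\<bar> + e * (y n - y m)" using t by linarith
    also have "\<dots> \<le> \<bar>z m\<bar> + e * y n" using ym e by (simp add: mult_left_mono)
    finally have zn: "\<bar>z n\<bar> \<le> \<bar>z m\<bar> + e * y n" .
    have "\<bar>z m\<bar> < e * y n"
    proof -
      have "\<bar>z m\<bar> + 1 \<le> e * y n" using yn e by (simp add: field_simps)
      then show ?thesis by simp
    qed
    then have "\<bar>z n\<bar> < 2 * e * y n" using zn by simp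
    then have "\<bar>z n\<bar> / y n < 2 * e" using ypos by (simp add: divide_less_eq)
    then show "norm (z n / y n - 0) < r" using ypos by (simp add: e_def abs_divide)
  qed
qed

lemma stolz_cesaro:
  fixes x y :: "nat \<Rightarrow> real"
  assumes ymono: "\<And>n. n \<ge> n0 \<Longrightarrow> y n < y (Suc n)"
    and inf: "filterlim y at_top sequentially"
    and lim: "(\<lambda>n. (x (Suc n) - x n) / (y (Suc n) - y n)) \<longlonglongrightarrow> L"
  shows "(\<lambda>n. x n / y n) \<longlonglongrightarrow> L"
proof -
  define z where "z n = x n - L * y n" for n
  have ev: "eventually (\<lambda>n. (x (Suc n) - x n) / (y (Suc n) - y n) - L = (z (Suc n) - z n) / (y (Suc n) - y n)) sequentially"
    unfolding eventually_sequentially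
  proof (intro exI allI impI)
    fix n assume "n \<ge> n0"
    then have "y (Suc n) - y n \<noteq> 0" using ymono[of n] by simp
    then show "(x (Suc n) - x n) / (y (Suc n) - y n) - L = (z (Suc n) - z n) / (y (Suc n) - y n)"
      by (simp add: z_def field_simps)
  qed
  have "(\<lambda>n. (x (Suc n) - x n) / (y (Suc n) - y n) - L) \<longlonglongrightarrow> 0"
    using tendsto_diff[OF lim tendsto_const[of L]] by simp
  then have "(\<lambda>n. (z (Suc n) - z n) / (y (Suc n) - y n)) \<longlonglongrightarrow> 0"
    using Lim_transform_eventually[OF _ ev] by blast
  then have "(\<lambda>n. z n / y n) \<longlonglongrightarrow> 0" using stolz_cesaro_zero[of n0 y z, OF ymono inf] by blast
  then have "(\<lambda>n. z n / y n + L) \<longlonglongrightarrow> 0 + L" by (intro tendsto_add) auto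
  moreover have "eventually (\<lambda>n. z n / y n + L = x n / y n) sequentially"
  proof -
    have "eventually (\<lambda>n. y n > 0) sequentially"
      using inf by (simp add: filterlim_at_top_dense)
    then show ?thesis by eventually_elim (simp add: z_def field_simps)
  qed
  ultimately show ?thesis using Lim_transform_eventually by fastforce
qed

text \<open>The variance sigma_N^2 = N(N-1)(2N+5)/72 of both statistics satisfies
  var (N+1) = var N + var_incr N, and var_incr N is of order N^2 while var N is of order N^3.\<close>

definition var :: "nat \<Rightarrow> real" where
  "var N = (2 * real N ^ 3 + 3 * real N ^ 2 - 5 * real N) / 72"

lemma var_nonneg: "var N \<ge> 0"
proof (cases N)
  case 0 then show ?thesis by (simp add: var_def)
next
  case (Suc M)
  have "2 * real N ^ 3 + 3 * real N ^ 2 - 5 * real N = real N * (real N - 1) * (2 * real N + 5)"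
    by (simp add: algebra_simps power2_eq_square power3_eq_cube)
  moreover have "real N * (real N - 1) * (2 * real N + 5) \<ge> 0" using Suc by simp
  ultimately show ?thesis by (simp add: var_def)
qed

lemma sigma_sq: "sigma_n N ^ 2 = var N"
  using var_nonneg[of N] by (simp add: sigma_n_def var_def)

lemma sigma_pow: "sigma_n N ^ (2 * K) = var N ^ K"
  by (simp add: power_mult sigma_sq)

lemma var_Suc: "var (Suc N) = var N + var_incr N"
  by (simp add: var_def var_incr_def algebra_simps power2_eq_square power3_eq_cube field_simps)

lemma var_incr_pos: "N \<ge> 1 \<Longrightarrow> var_incr N > 0" by (simp add: var_incr_def)

lemma var_pos: "N \<ge> 2 \<Longrightarrow> var N > 0"
proof -
  assume N: "N \<ge> 2"
  have "2 * real N ^ 3 + 3 * real N ^ 2 - 5 * real N = real N * (real N - 1) * (2 * real N + 5)"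
    by (simp add: algebra_simps power2_eq_square power3_eq_cube)
  moreover have "real N * (real N - 1) * (2 * real N + 5) > 0" using N by simp
  ultimately show ?thesis by (simp add: var_def)
qed

lemma sigma_pos: "N \<ge> 2 \<Longrightarrow> sigma_n N > 0"
  using var_pos[of N] by (simp add: sigma_n_def var_def)

lemma var_at_top: "filterlim var at_top sequentially"
  unfolding var_def by real_asymp

lemma lim_var_incr_var: "(\<lambda>N. var_incr N / var N) \<longlonglongrightarrow> 0"
  unfolding var_def var_incr_def by real_asymp

lemma lim_N_var_incr: "(\<lambda>N. real N / (4 * var_incr N)) \<longlonglongrightarrow> 0"
  unfolding var_incr_def by real_asymp

lemma lim_N2_var_incr: "(\<lambda>N. (real N / 2) ^ 2 / var_incr N) \<longlonglongrightarrow> 3"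
proof -
  have "(\<lambda>N. real N ^ 2 / (4 * var_incr N)) \<longlonglongrightarrow> 3" unfolding var_incr_def by real_asymp
  then show ?thesis by (simp add: power_divide)
qed

lemma lim_N_sigma: "(\<lambda>N. (real N / 2) / sigma_n N) \<longlonglongrightarrow> 0"
  unfolding sigma_n_def by real_asymp

fun gauss_moment :: "nat \<Rightarrow> real" where
  "gauss_moment 0 = 1" | "gauss_moment (Suc 0) = 0" | "gauss_moment (Suc (Suc n)) = real (Suc n) * gauss_moment n"

lemma choose2_real: "real (n choose 2) = real n * (real n - 1) / 2"
proof (induction n)
  case 0 then show ?case by simp
next
  case (Suc n)
  have "Suc n choose 2 = n + (n choose 2)" by (simp add: numeral_2_eq_2)
  then have "real (Suc n choose 2) = real n + real (n choose 2)" by simp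
  then show ?case using Suc by (simp add: field_simps)
qed

lemma gauss_moment_choose2: "real (a choose 2) * gauss_moment (a - 2) = real a / 2 * gauss_moment a"
proof (cases a rule: gauss_moment.cases)
  case (3 n) then show ?thesis by (simp add: choose2_real field_simps)
qed auto

lemma gauss_moment_odd: "gauss_moment (2 * r + 1) = 0"
proof (induction r)
  case (Suc r)
  have e: "2 * Suc r + 1 = Suc (Suc (2 * r + 1))" by simp
  have "gauss_moment (Suc (2 * r)) = 0" using Suc by simp
  then show ?case unfolding e by simp
qed simp

lemma gauss_moment_even: "gauss_moment (2 * r) = fact (2 * r) / (2 ^ r * fact r)"
proof (induction r)
  case 0 then show ?case by simp
next
  case (Suc r)
  have e: "2 * Suc r = Suc (Suc (2 * r))" by simp
  have "gauss_moment (2 * Suc r) = real (Suc (2 * r)) * gauss_moment (2 * r)"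
    unfolding e by (simp only: gauss_moment.simps)
  also have "\<dots> = fact (2 * Suc r) / (2 ^ Suc r * fact (Suc r))"
  proof -
    define A where "A = (2 * real r + 1) * fact (2 * r)"
    define B where "B = (2::real) ^ r * fact r"
    define c where "c = 2 * (real r + 1)"
    have f1: "(fact (2 * Suc r) :: real) = c * A"
      unfolding e A_def c_def by (simp add: algebra_simps)
    have f2: "2 ^ Suc r * (fact (Suc r) :: real) = c * B" unfolding B_def c_def by (simp add: algebra_simps)
    have "c \<noteq> 0" by (simp add: c_def)
    then have "fact (2 * Suc r) / (2 ^ Suc r * fact (Suc r)) = A / (B::real)"
      unfolding f1 f2 by simp
    then show ?thesis unfolding Suc A_def B_def by simp
  qed
  finally show ?case .
qed

context
  fixes K :: nat
  assumes IH: "\<And>a b. a + b = 2 * K \<Longrightarrow>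
    (\<lambda>N. moment N a b / var N ^ K) \<longlonglongrightarrow> gauss_moment a * gauss_moment b"
begin

text \<open>Terms with p + q \<ge> 3 are negligible: they carry a factor (N/2)^(p+q), while the remaining
  absolute moment is controlled by the (convergent) moments of order 2K.\<close>
lemma rec_term_negligible:
  assumes ab: "a + b = 2 * Suc K" and pq: "p \<le> a" "q \<le> b" "p + q \<ge> 3"
  shows "(\<lambda>N. rec_term N a b p q / (var_incr N * var N ^ K)) \<longlonglongrightarrow> 0"
proof -
  define t where "t = p + q - 2"
  have t: "p + q = t + 2" "t \<ge> 1" "t \<le> 2 * K" using pq ab by (auto simp: t_def)
  define G where "G N = 1 + moment N (2 * K) 0 / var N ^ K + moment N 0 (2 * K) / var N ^ K" for N
  define g where "g N = G N * ((real N / 2) ^ 2 / var_incr N) * ((real N / 2) / sigma_n N) ^ t" for N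
  have "G \<longlonglongrightarrow> 1 + gauss_moment (2 * K) * gauss_moment 0 + gauss_moment 0 * gauss_moment (2 * K)"
    unfolding G_def by (intro tendsto_add tendsto_const IH) auto
  then have "g \<longlonglongrightarrow> (1 + gauss_moment (2 * K) * gauss_moment 0 + gauss_moment 0 * gauss_moment (2 * K)) * 3 * 0 ^ t"
    unfolding g_def by (intro tendsto_mult tendsto_power lim_N2_var_incr lim_N_sigma)
  then have g0: "g \<longlonglongrightarrow> 0" using t by (simp add: power_0_left)
  show ?thesis
  proof (rule Lim_null_comparison[OF _ g0])
    show "eventually (\<lambda>N. norm (rec_term N a b p q / (var_incr N * var N ^ K)) \<le> g N) sequentially"
      using eventually_ge_at_top[of 2]
    proof eventually_elim
      case (elim N)
      have sp: "sigma_n N > 0" and vp: "var_incr N > 0" using sigma_pos var_incr_pos elim by auto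
      have ij: "(a - p) + (b - q) \<le> 2 * K" "(a - p) + (b - q) = 2 * K - t" using ab pq t by auto
      have "\<bar>rec_term N a b p q\<bar> \<le> (real N / 2) ^ (p + q) * abs_moment N (a - p) (b - q)"
        by (rule rec_term_bound)
      also have "\<dots> \<le> (real N / 2) ^ (t + 2) * (sigma_n N ^ (2 * K - t) * G N)"
      proof -
        have "abs_moment N (a - p) (b - q) \<le> sigma_n N ^ (2 * K - t) * G N"
          using abs_moment_bound[OF sp ij(1), of N] ij(2) by (simp add: G_def sigma_pow)
        then show ?thesis using t(1) by (simp add: mult_left_mono)
      qed
      finally have bound: "\<bar>rec_term N a b p q\<bar> \<le> (real N / 2) ^ (t + 2) * (sigma_n N ^ (2 * K - t) * G N)" .
      have den: "var_incr N * var N ^ K = var_incr N * sigma_n N ^ t * sigma_n N ^ (2 * K - t)"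
        using t by (simp add: sigma_pow[symmetric] flip: power_add)
      have "norm (rec_term N a b p q / (var_incr N * var N ^ K)) =
          \<bar>rec_term N a b p q\<bar> / (var_incr N * var N ^ K)"
        using vp sp by (simp add: den abs_divide)
      also have "\<dots> \<le> (real N / 2) ^ (t + 2) * (sigma_n N ^ (2 * K - t) * G N) / (var_incr N * var N ^ K)"
        using vp sp by (intro divide_right_mono bound) (simp add: den)
      also have "\<dots> = g N"
        using sp vp by (simp add: den g_def power_add power_divide field_simps power2_eq_square)
      finally show ?case .
    qed
  qed
qed

definition term_limit :: "nat \<Rightarrow> nat \<Rightarrow> nat \<Rightarrow> nat \<Rightarrow> real" where
  "term_limit a b p q =
     (if (p, q) = (2, 0) then gauss_moment (a - 2) * gauss_moment b
      else if (p, q) = (0, 2) then gauss_moment a * gauss_moment (b - 2) else 0)"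

lemma rec_term_20_limit:
  assumes "a + b = 2 * Suc K" and "2 \<le> a"
  shows "(\<lambda>N. rec_term N a b 2 0 / (var_incr N * var N ^ K)) \<longlonglongrightarrow> gauss_moment (a - 2) * gauss_moment b"
proof -
  have "eventually (\<lambda>N. moment N (a - 2) b / var N ^ K =
      rec_term N a b 2 0 / (var_incr N * var N ^ K)) sequentially"
    using eventually_ge_at_top[of 1]
  proof eventually_elim
    case (elim N)
    then have "var_incr N > 0" by (simp add: var_incr_pos)
    then show ?case by (simp add: rec_term_20)
  qed
  moreover have "(\<lambda>N. moment N (a - 2) b / var N ^ K) \<longlonglongrightarrow> gauss_moment (a - 2) * gauss_moment b"
    using assms by (intro IH) simp
  ultimately show ?thesis by (rule Lim_transform_eventually[rotated])
qed

lemma rec_term_02_limit: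
  assumes "a + b = 2 * Suc K" and "2 \<le> b"
  shows "(\<lambda>N. rec_term N a b 0 2 / (var_incr N * var N ^ K)) \<longlonglongrightarrow> gauss_moment a * gauss_moment (b - 2)"
proof -
  have "eventually (\<lambda>N. moment N a (b - 2) / var N ^ K =
      rec_term N a b 0 2 / (var_incr N * var N ^ K)) sequentially"
    using eventually_ge_at_top[of 1]
  proof eventually_elim
    case (elim N)
    then have "var_incr N > 0" by (simp add: var_incr_pos)
    then show ?case by (simp add: rec_term_02)
  qed
  moreover have "(\<lambda>N. moment N a (b - 2) / var N ^ K) \<longlonglongrightarrow> gauss_moment a * gauss_moment (b - 2)"
    using assms by (intro IH) simp
  ultimately show ?thesis by (rule Lim_transform_eventually[rotated])
qed

text \<open>The mixed term (1,1) is of order N / N^2 relative to the moments of degree 2K.\<close>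
lemma rec_term_11_limit:
  assumes ab: "a + b = 2 * Suc K" and a1: "1 \<le> a" "1 \<le> b"
  shows "(\<lambda>N. rec_term N a b 1 1 / (var_incr N * var N ^ K)) \<longlonglongrightarrow> 0"
proof -
  have e: "even (a + b)" using ab by simp
  have "rec_term N a b 1 1 / (var_incr N * var N ^ K) =
      (real N / (4 * var_incr N)) * (moment N (a - 1) (b - 1) / var N ^ K)" for N
    unfolding rec_term_11[OF e a1] by (simp add: mult_ac)
  moreover have "(\<lambda>N. (real N / (4 * var_incr N)) * (moment N (a - 1) (b - 1) / var N ^ K))
      \<longlonglongrightarrow> 0 * (gauss_moment (a - 1) * gauss_moment (b - 1))"
    using ab a1 by (intro tendsto_mult lim_N_var_incr IH) auto
  ultimately show ?thesis by simp
qed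

lemma rec_term_limit:
  assumes ab: "a + b = 2 * Suc K" and pq: "p \<le> a" "q \<le> b" "(p, q) \<noteq> (0, 0)"
  shows "(\<lambda>N. rec_term N a b p q / (var_incr N * var N ^ K)) \<longlonglongrightarrow> term_limit a b p q"
proof -
  have "p + q \<ge> 3 \<or> (p, q) \<in> {(1, 0), (0, 1), (2, 0), (0, 2), (1, 1)}"
    using pq(3) by auto
  then consider "p + q \<ge> 3" | "(p, q) = (1, 0)" | "(p, q) = (0, 1)" | "(p, q) = (2, 0)"
    | "(p, q) = (0, 2)" | "(p, q) = (1, 1)" by blast
  then show ?thesis
  proof cases
    case 1 then show ?thesis using rec_term_negligible[OF ab pq(1,2)] by (auto simp: term_limit_def)
  next
    case 2 then show ?thesis by (simp add: rec_term_10[simplified] term_limit_def)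
  next
    case 3 then show ?thesis by (simp add: rec_term_01[simplified] term_limit_def)
  next
    case 4 then show ?thesis using rec_term_20_limit[OF ab] pq by (simp add: term_limit_def)
  next
    case 5 then show ?thesis using rec_term_02_limit[OF ab] pq by (simp add: term_limit_def)
  next
    case 6 then show ?thesis using rec_term_11_limit[OF ab] pq by (simp add: term_limit_def)
  qed
qed

text \<open>Hence the increment of a moment of total degree 2K + 2, normalised by var_incr N * var N ^ K,
  tends to (a + b)/2 * g(a) g(b) = (K + 1) g(a) g(b).\<close>
lemma moment_increment_limit:
  assumes ab: "a + b = 2 * Suc K"
  shows "(\<lambda>N. (moment (Suc N) a b - moment N a b) / (var_incr N * var N ^ K))
           \<longlonglongrightarrow> real (Suc K) * (gauss_moment a * gauss_moment b)"
proof -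
  define C where "C z = real (a choose fst z) * real (b choose snd z)" for z :: "nat \<times> nat"
  define Q where "Q = ({..a} \<times> {..b}) - {(0::nat, 0::nat)}"
  have "moment (Suc N) a b = (\<Sum>z\<in>{..a} \<times> {..b}. C z * rec_term N a b (fst z) (snd z))" for N
    unfolding moment_Suc C_def by (simp add: sum.cartesian_product case_prod_beta)
  also have "\<dots> N = moment N a b + (\<Sum>z\<in>Q. C z * rec_term N a b (fst z) (snd z))" for N
    unfolding Q_def by (subst sum.remove[of _ "(0, 0)"]) (auto simp: C_def rec_term_00)
  finally have incr: "(moment (Suc N) a b - moment N a b) / (var_incr N * var N ^ K) =
      (\<Sum>z\<in>Q. C z * (rec_term N a b (fst z) (snd z) / (var_incr N * var N ^ K)))" for N
    by (simp add: sum_divide_distrib)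
  have "(\<lambda>N. \<Sum>z\<in>Q. C z * (rec_term N a b (fst z) (snd z) / (var_incr N * var N ^ K)))
      \<longlonglongrightarrow> (\<Sum>z\<in>Q. C z * term_limit a b (fst z) (snd z))"
    by (intro tendsto_sum tendsto_mult tendsto_const rec_term_limit[OF ab]) (auto simp: Q_def)
  moreover have "(\<Sum>z\<in>Q. C z * term_limit a b (fst z) (snd z)) =
      real (a choose 2) * gauss_moment (a - 2) * gauss_moment b +
      real (b choose 2) * gauss_moment a * gauss_moment (b - 2)"
  proof -
    have "(\<Sum>z\<in>Q. C z * term_limit a b (fst z) (snd z)) =
        (\<Sum>z\<in>Q. (if z = (2, 0) then C (2, 0) * (gauss_moment (a - 2) * gauss_moment b) else 0) +
                (if z = (0, 2) then C (0, 2) * (gauss_moment a * gauss_moment (b - 2)) else 0))"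
      by (intro sum.cong) (auto simp: term_limit_def)
    also have "\<dots> = (if (2, 0) \<in> Q then C (2, 0) * (gauss_moment (a - 2) * gauss_moment b) else 0) +
        (if (0, 2) \<in> Q then C (0, 2) * (gauss_moment a * gauss_moment (b - 2)) else 0)"
      by (simp add: sum.distrib Q_def)
    finally show ?thesis by (auto simp: Q_def C_def binomial_eq_0)
  qed
  moreover have "\<dots> = real (Suc K) * (gauss_moment a * gauss_moment b)"
  proof -
    have "real (a choose 2) * gauss_moment (a - 2) * gauss_moment b +
        real (b choose 2) * gauss_moment a * gauss_moment (b - 2) =
        (real a + real b) / 2 * (gauss_moment a * gauss_moment b)"
      using gauss_moment_choose2[of a] gauss_moment_choose2[of b] by (simp add: field_simps)
    also have "(real a + real b) / 2 = real (Suc K)" using ab by (simp flip: of_nat_add)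
    finally show ?thesis .
  qed
  ultimately show ?thesis unfolding incr by simp
qed

end

lemma var_power_increment_limit:
  "(\<lambda>N. (var (Suc N) ^ Suc K - var N ^ Suc K) / (var_incr N * var N ^ K)) \<longlonglongrightarrow> real (Suc K)"
proof -
  have "(\<lambda>N. \<Sum>p<Suc K. (1 + var_incr N / var N) ^ p) \<longlonglongrightarrow> (\<Sum>p<Suc K. (1 + 0) ^ p)"
    by (intro tendsto_sum tendsto_power tendsto_add tendsto_const lim_var_incr_var)
  moreover have "eventually (\<lambda>N. (\<Sum>p<Suc K. (1 + var_incr N / var N) ^ p) =
      (var (Suc N) ^ Suc K - var N ^ Suc K) / (var_incr N * var N ^ K)) sequentially"
    using eventually_ge_at_top[of 2]
  proof eventually_elim
    case (elim N)
    have sp: "var N > 0" and vp: "var_incr N > 0" using var_pos var_incr_pos elim by auto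
    have "var (Suc N) ^ Suc K - var N ^ Suc K = (var N + var_incr N) ^ Suc K - var N ^ Suc K"
      by (simp only: var_Suc)
    also have "\<dots> = var_incr N * (\<Sum>p<Suc K. (var N + var_incr N) ^ p * var N ^ (K - p))"
      by (subst diff_power_eq_sum) (simp del: sum.lessThan_Suc)
    also have "\<dots> = var_incr N * var N ^ K * (\<Sum>p<Suc K. (1 + var_incr N / var N) ^ p)"
    proof -
      have "(var N + var_incr N) ^ p * var N ^ (K - p) = var N ^ K * (1 + var_incr N / var N) ^ p"
        if "p < Suc K" for p
      proof -
        have "var N ^ K = var N ^ p * var N ^ (K - p)" using that by (simp flip: power_add)
        then show ?thesis using sp by (simp add: power_divide field_simps)
      qed
      then show ?thesis by (simp add: sum_distrib_left mult.assoc del: sum.lessThan_Suc)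
    qed
    finally show ?case using sp vp by simp
  qed
  ultimately show ?thesis by (simp add: Lim_transform_eventually)
qed

lemma moment_limit_step:
  assumes IH: "\<And>a b. a + b = 2 * K \<Longrightarrow>
      (\<lambda>N. moment N a b / var N ^ K) \<longlonglongrightarrow> gauss_moment a * gauss_moment b"
    and ab: "a + b = 2 * Suc K"
  shows "(\<lambda>N. moment N a b / var N ^ Suc K) \<longlonglongrightarrow> gauss_moment a * gauss_moment b"
proof (rule stolz_cesaro)
  show "var n ^ Suc K < var (Suc n) ^ Suc K" if "n \<ge> 1" for n
    using var_incr_pos[OF that] var_nonneg[of n] by (intro power_strict_mono) (auto simp: var_Suc)
  show "filterlim (\<lambda>N. var N ^ Suc K) at_top sequentially"
    by (rule filterlim_pow_at_top[OF _ var_at_top]) simp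
  have "(\<lambda>N. ((moment (Suc N) a b - moment N a b) / (var_incr N * var N ^ K)) /
      ((var (Suc N) ^ Suc K - var N ^ Suc K) / (var_incr N * var N ^ K)))
      \<longlonglongrightarrow> (real (Suc K) * (gauss_moment a * gauss_moment b)) / real (Suc K)"
    by (intro tendsto_divide moment_increment_limit[OF IH ab] var_power_increment_limit) simp_all
  moreover have "eventually (\<lambda>N. ((moment (Suc N) a b - moment N a b) / (var_incr N * var N ^ K)) /
      ((var (Suc N) ^ Suc K - var N ^ Suc K) / (var_incr N * var N ^ K)) =
      (moment (Suc N) a b - moment N a b) / (var (Suc N) ^ Suc K - var N ^ Suc K)) sequentially"
    using eventually_ge_at_top[of 2]
  proof eventually_elim
    case (elim N)
    have "var N > 0" "var_incr N > 0" using var_pos var_incr_pos elim by auto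
    then have "var_incr N * var N ^ K \<noteq> 0" by simp
    then show ?case by simp
  qed
  ultimately show "(\<lambda>N. (moment (Suc N) a b - moment N a b) / (var (Suc N) ^ Suc K - var N ^ Suc K))
      \<longlonglongrightarrow> gauss_moment a * gauss_moment b"
    by (simp add: Lim_transform_eventually)
qed

lemma moment_limit:
  "a + b = 2 * K \<Longrightarrow> (\<lambda>N. moment N a b / var N ^ K) \<longlonglongrightarrow> gauss_moment a * gauss_moment b"
proof (induction K arbitrary: a b)
  case 0
  then show ?case by (simp add: moment_00)
next
  case (Suc K)
  show ?case by (rule moment_limit_step[OF Suc.IH Suc.prems])
qed

lemma M_mom_moment: "M_mom a b n = moment n a b / sigma_n n ^ (a + b)"
proof -
  have "M_mom a b n = (\<Sum>p\<in>perms n. inv_c n p ^ a * maj_c n p ^ b / sigma_n n ^ (a + b)) / fact n"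
    unfolding M_mom_def X_n_def Y_n_def card_perms[unfolded perms_def] perms_def[symmetric]
    by (simp add: inv_c_def maj_c_def power_divide power_add card_perms)
  then show ?thesis by (simp add: moment_def power_sum_def sum_divide_distrib ac_simps)
qed

lemma M_mom_limit:
  assumes "a + b = 2 * K"
  shows "(\<lambda>n. M_mom a b n) \<longlonglongrightarrow> gauss_moment a * gauss_moment b"
  using moment_limit[OF assms] by (simp add: M_mom_moment assms sigma_pow)

lemma M_mom_odd: "odd (a + b) \<Longrightarrow> M_mom a b n = 0"
  by (simp add: M_mom_moment moment_def power_sum_odd)

theorem mainTheorem2:
  fixes r s :: nat
  assumes "r \<ge> 1" and "s \<ge> 1"
  shows "((\<lambda>n. M_mom (2 * r) (2 * s) n) \<longlongrightarrow>
           (fact (2 * r) / (2 ^ r * fact r)) * (fact (2 * s) / (2 ^ s * fact s))) sequentially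
       \<and> ((\<lambda>n. M_mom (2 * r - 1) (2 * s - 1) n) \<longlongrightarrow> 0) sequentially
       \<and> (\<forall>n\<ge>2. M_mom (2 * r) (2 * s - 1) n = 0)
       \<and> (\<forall>n\<ge>2. M_mom (2 * r - 1) (2 * s) n = 0)"
proof (intro conjI allI impI)
  show "(\<lambda>n. M_mom (2 * r) (2 * s) n) \<longlonglongrightarrow>
      (fact (2 * r) / (2 ^ r * fact r)) * (fact (2 * s) / (2 ^ s * fact s))"
    using M_mom_limit[of "2 * r" "2 * s" "r + s"] by (simp add: gauss_moment_even)
  have "2 * r - 1 = 2 * (r - 1) + 1" using assms by simp
  then have "gauss_moment (2 * r - 1) = 0" by (simp only: gauss_moment_odd)
  then show "(\<lambda>n. M_mom (2 * r - 1) (2 * s - 1) n) \<longlonglongrightarrow> 0"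
    using M_mom_limit[of "2 * r - 1" "2 * s - 1" "r + s - 1"] assms by simp
  show "M_mom (2 * r) (2 * s - 1) n = 0" "M_mom (2 * r - 1) (2 * s) n = 0" for n
    using assms by (simp_all add: M_mom_odd)
qed

end
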